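(* Let $A\in\mathbb{R}^{n\times n}$ have rank one. Then $A$ is a Karamardian matrix if and only if its group inverse $A^{\#}$ (which exists in this case) is a Karamardian matrix. Moreover, in this case both $A$ and $A^{\#}$ are range monotone.
   Context: The group inverse $A^{\#}$ of a square $A$ is the unique $X$ (if it exists) with $AXA=A$, $XAX=X$, $AX=XA$. A square matrix $M$ is range monotone if $Mx\ge 0$ and $x\in R(M)$ imply $x\ge 0$. For $A\in\mathbb{R}^{n\times n}$ let $K_A=\mathbb{R}^n_+\cap R(A)$ and $K_A^*=\{y\in\mathbb{R}^n: x^Ty\ge 0 \text{ for all } x\in K_A\}$ (one has $K_A^*=\mathbb{R}^n_++N(A^T)$, and its interior is $\{a+b: a>0,\ b\in N(A^T)\}$). For $q\in\mathbb{R}^n$, LCP$(A,K_A,q)$ is to find $x$ with $x\in K_A$, $Ax+q\in K_A^*$, $x^T(Ax+q)=0$. $A$ is a Karamardian matrix if $K_A\ne\{0\}$ and there exists $d$ in the interior of $K_A^*$ such that both LCP$(A,K_A,0)$ and LCP$(A,K_A,d)$ have $x=0$ as their only solution. *)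

theory Defs
  imports "HOL-Analysis.Analysis"
begin

definition is_group_inverse :: "real^'n^'n \<Rightarrow> real^'n^'n \<Rightarrow> bool" where
  "is_group_inverse A X \<longleftrightarrow> A ** X ** A = A \<and> X ** A ** X = X \<and> A ** X = X ** A"

definition nonneg :: "real^'n \<Rightarrow> bool" where
  "nonneg x \<longleftrightarrow> (\<forall>i. x $ i \<ge> 0)"

definition range_monotone :: "real^'n^'n \<Rightarrow> bool" where
  "range_monotone M \<longleftrightarrow>
     (\<forall>x. nonneg (M *v x) \<and> x \<in> range (\<lambda>y. M *v y) \<longrightarrow> nonneg x)"

definition KA :: "real^'n^'n \<Rightarrow> (real^'n) set" where
  "KA A = {x. nonneg x} \<inter> range (\<lambda>y. A *v y)"

definition dual_cone :: "(real^'n) set \<Rightarrow> (real^'n) set" where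
  "dual_cone K = {y. \<forall>x\<in>K. x \<bullet> y \<ge> 0}"

definition lcp_sol :: "real^'n^'n \<Rightarrow> (real^'n) set \<Rightarrow> real^'n \<Rightarrow> real^'n \<Rightarrow> bool" where
  "lcp_sol A K q x \<longleftrightarrow> x \<in> K \<and> A *v x + q \<in> dual_cone K \<and> x \<bullet> (A *v x + q) = 0"

definition karamardian :: "real^'n^'n \<Rightarrow> bool" where
  "karamardian A \<longleftrightarrow> KA A \<noteq> {0} \<and>
     (\<exists>d \<in> interior (dual_cone (KA A)).
        (\<forall>x. lcp_sol A (KA A) 0 x \<longleftrightarrow> x = 0) \<and>
        (\<forall>x. lcp_sol A (KA A) d x \<longleftrightarrow> x = 0))"

end

(*
  The range of a rank-one A is a line span {u}, and A acts on it as multiplication by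
  the scalar l with A u = l u.  Hence K_A is either {0} (u has entries of both signs)
  or the ray through u or -u, and on that ray LCP(A, K_A, q) is a scalar complementarity
  problem in t >= 0 with slope l |u|^2; it has only the trivial solution for q = 0 and
  for some q in the interior of the dual cone exactly when l > 0.  A group inverse exists
  iff l \<noteq> 0; it has the same range and acts there as 1/l, so the same criterion applies
  to it.  Range monotonicity holds because x = l\<^sup>-\<^sup>1 A x for x in the range.
*)
theory Submission
  imports Defs
begin

lemma rank_one_range_eq_span:
  fixes A :: "real^'n^'n"
  assumes "rank A = 1"
  obtains u where "u \<noteq> 0" "range ((*v) A) = span {u}"
proof -
  let ?V = "range ((*v) A)"
  have "subspace ?V"
    using subspace_UNIV by (intro linear_subspace_image) (simp add: matrix_vector_mul_linear)
  moreover obtain B where B: "B \<subseteq> ?V" "independent B" "?V \<subseteq> span B" "card B = dim ?V"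
    using basis_exists by blast
  moreover have "card B = 1" using B assms by (simp add: rank_dim_range)
  then obtain u where "B = {u}" using card_1_singletonE by blast
  ultimately show ?thesis
    using that by (metis dependent_single span_subspace)
qed

lemma eigenvalue_on_range:
  fixes M :: "real^'n^'n"
  assumes "range ((*v) M) = span {u}" "M *v u = c *\<^sub>R u" "x \<in> range ((*v) M)"
  shows "M *v x = c *\<^sub>R x"
proof -
  obtain s where "x = s *\<^sub>R u" using assms(1,3) by (auto simp: span_singleton)
  then show ?thesis by (simp add: assms(2) matrix_vector_mult_scaleR)
qed

lemma nonneg_scaleR: "nonneg x \<Longrightarrow> 0 \<le> c \<Longrightarrow> nonneg (c *\<^sub>R x)"
  unfolding nonneg_def by simp

lemma range_monotone_if_positive_on_range:
  fixes M :: "real^'n^'n"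
  assumes "\<And>x. x \<in> range ((*v) M) \<Longrightarrow> M *v x = c *\<^sub>R x" "c > 0"
  shows "range_monotone M"
  unfolding range_monotone_def
proof (intro allI impI)
  fix x assume x: "nonneg (M *v x) \<and> x \<in> range ((*v) M)"
  then have "M *v x = c *\<^sub>R x" using assms(1) by blast
  then have "x = inverse c *\<^sub>R (M *v x)" using \<open>c > 0\<close> by simp
  then show "nonneg x" using nonneg_scaleR[of "M *v x" "inverse c"] x \<open>c > 0\<close> by simp
qed

lemma nonneg_scaleR_iff:
  assumes "nonneg u" "u \<noteq> 0"
  shows "nonneg (s *\<^sub>R u) \<longleftrightarrow> 0 \<le> s"
proof
  obtain i where "u $ i \<noteq> 0" using assms(2) by (auto simp: vec_eq_iff)
  then have "0 < u $ i" using assms(1) by (metis nonneg_def order_le_less)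
  moreover assume "nonneg (s *\<^sub>R u)"
  then have "0 \<le> s * u $ i" by (simp add: nonneg_def)
  ultimately show "0 \<le> s" by (simp add: zero_le_mult_iff)
qed (use assms nonneg_scaleR in blast)

lemma KA_eq_ray:
  fixes M :: "real^'n^'n"
  assumes "range ((*v) M) = span {u}" "nonneg u" "u \<noteq> 0"
  shows "KA M = (\<lambda>t. t *\<^sub>R u) ` {0..}"
  using nonneg_scaleR_iff[OF assms(2,3)] by (auto simp: KA_def assms(1) span_singleton)

lemma KA_eq_zero:
  fixes M :: "real^'n^'n"
  assumes "range ((*v) M) = span {u}" "\<not> nonneg u" "\<not> nonneg (- u)"
  shows "KA M = {0}"
proof -
  have zero: "s = 0" if "nonneg (s *\<^sub>R u)" for s
  proof (cases s "0::real" rule: linorder_cases)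
    case less
    then have "nonneg ((- inverse s) *\<^sub>R (s *\<^sub>R u))"
      by (intro nonneg_scaleR[OF that]) simp
    with less assms(3) show ?thesis by simp
  next
    case greater
    then have "nonneg (inverse s *\<^sub>R (s *\<^sub>R u))"
      by (intro nonneg_scaleR[OF that]) simp
    with greater assms(2) show ?thesis by simp
  qed
  show ?thesis
  proof (intro set_eqI iffI)
    fix x :: "real^'n" assume "x \<in> KA M"
    then obtain s where "x = s *\<^sub>R u" "nonneg x"
      by (auto simp: KA_def assms(1) span_singleton)
    with zero show "x \<in> {0}" by simp
  next
    fix x :: "real^'n" assume "x \<in> {0}"
    then show "x \<in> KA M"
      by (auto simp: KA_def nonneg_def intro: range_eqI[of _ _ 0])
  qed
qed

lemma dual_cone_ray: "dual_cone ((\<lambda>t. t *\<^sub>R u) ` {0..}) = {y. 0 \<le> u \<bullet> y}"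
proof -
  have "u \<in> (\<lambda>t. t *\<^sub>R u) ` {0..}" by (rule image_eqI[of _ _ 1]) auto
  show ?thesis
  proof (intro set_eqI iffI)
    fix y assume "y \<in> dual_cone ((\<lambda>t. t *\<^sub>R u) ` {0..})"
    with \<open>u \<in> _\<close> show "y \<in> {y. 0 \<le> u \<bullet> y}" unfolding dual_cone_def by blast
  next
    fix y assume "y \<in> {y. 0 \<le> u \<bullet> y}"
    then show "y \<in> dual_cone ((\<lambda>t. t *\<^sub>R u) ` {0..})" by (auto simp: dual_cone_def)
  qed
qed

lemma lcp_sol_ray:
  fixes M :: "real^'n^'n"
  assumes K: "KA M = (\<lambda>t. t *\<^sub>R u) ` {0..}" and Mu: "M *v u = c *\<^sub>R u"
  shows "lcp_sol M (KA M) q x \<longleftrightarrow>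
    (\<exists>t\<ge>0. x = t *\<^sub>R u \<and> 0 \<le> t * c * (u \<bullet> u) + u \<bullet> q
       \<and> t * (t * c * (u \<bullet> u) + u \<bullet> q) = 0)"
proof -
  have u_inner: "u \<bullet> (M *v (t *\<^sub>R u) + q) = t * c * (u \<bullet> u) + u \<bullet> q" for t
    by (simp add: Mu matrix_vector_mult_scaleR inner_add_right)
  show ?thesis
    unfolding lcp_sol_def K dual_cone_ray by (auto simp: u_inner)
qed

lemma karamardian_ray_iff:
  fixes M :: "real^'n^'n"
  assumes R: "range ((*v) M) = span {u}" and u: "nonneg u" "u \<noteq> 0"
    and Mu: "M *v u = c *\<^sub>R u"
  shows "karamardian M \<longleftrightarrow> 0 < c"
proof -
  have K: "KA M = (\<lambda>t. t *\<^sub>R u) ` {0..}" using KA_eq_ray[OF R u] .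
  have int: "interior (dual_cone (KA M)) = {y. 0 < u \<bullet> y}"
    unfolding K dual_cone_ray using u(2) by simp
  have N: "0 < u \<bullet> u" using u(2) by simp
  note lcp = lcp_sol_ray[OF K Mu]
  show ?thesis
  proof
    assume kar: "karamardian M"
    then obtain d where d: "0 < u \<bullet> d" and only_0: "\<And>x. lcp_sol M (KA M) d x \<longleftrightarrow> x = 0"
      and only_0': "\<And>x. lcp_sol M (KA M) 0 x \<longleftrightarrow> x = 0"
      unfolding karamardian_def int by blast
    show "0 < c"
    proof (rule ccontr)
      assume "\<not> 0 < c"
      then consider "c = 0" | "c < 0" by linarith
      then show False
      proof cases
        case 1
        then have "lcp_sol M (KA M) 0 u" unfolding lcp by (intro exI[of _ 1]) simp
        then show False using only_0' u(2) by blast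
      next
        case 2
        \<comment> \<open>the affine function of t in lcp_sol_ray decreases from u \<bullet> d > 0 and vanishes at t\<close>
        define t where "t = - (u \<bullet> d) / (c * (u \<bullet> u))"
        have "0 < t" unfolding t_def using d N 2 by (simp add: divide_pos_neg mult_neg_pos)
        moreover have "t * c * (u \<bullet> u) + u \<bullet> d = 0" unfolding t_def using N 2 by simp
        ultimately have "lcp_sol M (KA M) d (t *\<^sub>R u)" unfolding lcp by (auto intro!: exI[of _ t])
        then show False using only_0 \<open>0 < t\<close> u(2) by simp
      qed
    qed
  next
    assume "0 < c"
    have only_0: "lcp_sol M (KA M) q x \<longleftrightarrow> x = 0" if q: "0 \<le> u \<bullet> q" for q x
    proof
      assume "lcp_sol M (KA M) q x"
      then obtain t where t: "0 \<le> t" "x = t *\<^sub>R u" "t * (t * c * (u \<bullet> u) + u \<bullet> q) = 0"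
        unfolding lcp by blast
      have "t = 0"
      proof (rule ccontr)
        assume "t \<noteq> 0"
        then have "0 < t * c * (u \<bullet> u) + u \<bullet> q"
          using t(1) \<open>0 < c\<close> N q by (simp add: add_pos_nonneg)
        then show False using t(3) \<open>t \<noteq> 0\<close> by simp
      qed
      then show "x = 0" using t(2) by simp
    qed (use q lcp in auto)
    have "u \<in> KA M" unfolding K by (rule image_eqI[of _ _ 1]) auto
    then show "karamardian M"
      unfolding karamardian_def using u(2) N only_0[of 0] only_0[of u]
      by (intro conjI bexI[of _ u]) (auto simp: int)
  qed
qed

lemma span_singleton_neg: "span {- u} = span {u}"
proof -
  have "- u \<in> span {u}" "- (- u) \<in> span {- u}"
    by (simp_all only: span_neg span_base singletonI)
  then show ?thesis by (simp add: span_eq)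
qed

lemma karamardian_rank_one_iff:
  fixes M :: "real^'n^'n"
  assumes R: "range ((*v) M) = span {u}" and "u \<noteq> 0" and Mu: "M *v u = c *\<^sub>R u"
  shows "karamardian M \<longleftrightarrow> 0 < c \<and> (nonneg u \<or> nonneg (- u))"
proof (cases "nonneg u")
  case True
  then show ?thesis using karamardian_ray_iff[OF R True \<open>u \<noteq> 0\<close> Mu] by simp
next
  case False
  show ?thesis
  proof (cases "nonneg (- u)")
    case True
    have "M *v (- u) = c *\<^sub>R (- u)" by (simp add: Mu linear_neg[OF matrix_vector_mul_linear])
    then show ?thesis
      using karamardian_ray_iff[of M "- u"] R True \<open>u \<noteq> 0\<close> by (simp add: span_singleton_neg)
  next
    case False
    then show ?thesis
      using KA_eq_zero[OF R \<open>\<not> nonneg u\<close> False] \<open>\<not> nonneg u\<close> False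
      by (simp add: karamardian_def)
  qed
qed

lemma is_group_inverse_sym: "is_group_inverse A X \<Longrightarrow> is_group_inverse X A"
  unfolding is_group_inverse_def by argo

lemma group_inverse_range_subset:
  assumes "is_group_inverse A X"
  shows "range ((*v) X) \<subseteq> range ((*v) A)"
proof
  fix y assume "y \<in> range ((*v) X)"
  then obtain w where "y = X *v w" by blast
  also have "X = A ** X ** X"
    using assms unfolding is_group_inverse_def by simp
  finally show "y \<in> range ((*v) A)" by (simp add: matrix_vector_mul_assoc[symmetric])
qed

lemma group_inverse_cancel_on_range:
  assumes "is_group_inverse A X" "x \<in> range ((*v) A)"
  shows "X *v (A *v x) = x"
proof -
  obtain w where x: "x = A *v w" using assms(2) by blast
  have "X ** A ** A = A" using assms(1) unfolding is_group_inverse_def by argo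
  then show ?thesis unfolding x by (metis matrix_vector_mul_assoc)
qed

lemma group_inverse_eigenvector:
  assumes G: "is_group_inverse A X" and u: "u \<in> range ((*v) A)" "u \<noteq> 0"
    and Au: "A *v u = l *\<^sub>R u"
  shows "l \<noteq> 0" "X *v u = inverse l *\<^sub>R u"
proof -
  have eq: "l *\<^sub>R (X *v u) = u"
    using group_inverse_cancel_on_range[OF G u(1)] by (simp add: Au matrix_vector_mult_scaleR)
  then show "l \<noteq> 0" using u(2) by auto
  then show "X *v u = inverse l *\<^sub>R u" using eq by (metis scaleR_scaleR left_inverse scaleR_one)
qed

lemma group_inverse_rank_one:
  fixes A :: "real^'n^'n"
  assumes R: "range ((*v) A) = span {u}" and Au: "A *v u = l *\<^sub>R u" and "l \<noteq> 0"
  shows "is_group_inverse A (inverse (l\<^sup>2) *\<^sub>R A)"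
proof -
  have square: "A ** A = l *\<^sub>R A"
    unfolding matrix_eq
  proof
    fix w
    have "A *v (A *v w) = l *\<^sub>R (A *v w)" by (rule eigenvalue_on_range[OF R Au rangeI])
    then show "(A ** A) *v w = (l *\<^sub>R A) *v w"
      by (simp add: matrix_vector_mul_assoc[symmetric] scaleR_matrix_vector_assoc)
  qed
  show ?thesis
    unfolding is_group_inverse_def using \<open>l \<noteq> 0\<close>
    by (simp add: matrix_scalar_ac scalar_matrix_assoc[symmetric] square power2_eq_square field_simps)
qed

theorem mainTheorem7:
  fixes A :: "real^'n^'n"
  assumes "rank A = 1"
  shows "(karamardian A \<longleftrightarrow> (\<exists>X. is_group_inverse A X \<and> karamardian X))
       \<and> (karamardian A \<longrightarrow>
            range_monotone A \<and> (\<forall>X. is_group_inverse A X \<longrightarrow> range_monotone X))"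
proof -
  obtain u where "u \<noteq> 0" and R: "range ((*v) A) = span {u}"
    using rank_one_range_eq_span[OF assms] .
  have u_range: "u \<in> range ((*v) A)" unfolding R by (simp add: span_base)
  have "A *v u \<in> span {u}" unfolding R[symmetric] by (rule rangeI)
  then obtain l where Au: "A *v u = l *\<^sub>R u" by (auto simp: span_singleton)
  have kar_A: "karamardian A \<longleftrightarrow> 0 < l \<and> (nonneg u \<or> nonneg (- u))"
    using karamardian_rank_one_iff[OF R \<open>u \<noteq> 0\<close> Au] .
  have kar_X: "karamardian X \<longleftrightarrow> karamardian A"
    and mono_X: "0 < l \<Longrightarrow> range_monotone X" if G: "is_group_inverse A X" for X
  proof -
    have RX: "range ((*v) X) = span {u}"
      using group_inverse_range_subset[OF G] group_inverse_range_subset[OF is_group_inverse_sym[OF G]] R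
      by blast
    note Xu = group_inverse_eigenvector[OF G u_range \<open>u \<noteq> 0\<close> Au]
    show "karamardian X \<longleftrightarrow> karamardian A"
      using karamardian_rank_one_iff[OF RX \<open>u \<noteq> 0\<close> Xu(2)] kar_A by simp
    show "0 < l \<Longrightarrow> range_monotone X"
      by (rule range_monotone_if_positive_on_range[OF eigenvalue_on_range[OF RX Xu(2)]]) auto
  qed
  have "0 < l \<Longrightarrow> is_group_inverse A (inverse (l\<^sup>2) *\<^sub>R A)"
    by (simp add: group_inverse_rank_one[OF R Au])
  moreover have "0 < l \<Longrightarrow> range_monotone A"
    by (rule range_monotone_if_positive_on_range[OF eigenvalue_on_range[OF R Au]])
  ultimately show ?thesis using kar_A kar_X mono_X by blast
qed

end
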